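(* Let $n\geq 5$ and let $G=C^2_n$. Then $G$ does not contain $W_6$ as a minor if and only if $5\leq n\leq 8$.
   Context: All graphs are finite and simple. For $n\geq 5$, $C^2_n$ is the graph obtained from a cycle $C_n$ by adding an edge between every pair of vertices at distance two on the cycle (it is $4$-connected). $W_6$ is the wheel obtained by joining a single new vertex to all vertices of a cycle of length $6$. A minor is obtained by a sequence of edge deletions and edge contractions (parallel edges arising from contractions are reduced to single edges). *)

theory Defs
  imports Main
begin

type_synonym graph = "nat set \<times> nat set set"

definition verts :: "graph \<Rightarrow> nat set" where "verts G = fst G"
definition edges :: "graph \<Rightarrow> nat set set" where "edges G = snd G"

definition simple_graph :: "graph \<Rightarrow> bool" where
  "simple_graph G \<longleftrightarrow> finite (verts G) \<and>
     (\<forall>e\<in>edges G. e \<subseteq> verts G \<and> card e = 2)"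

definition del_edge :: "graph \<Rightarrow> nat set \<Rightarrow> graph" where
  "del_edge G e = (verts G, edges G - {e})"

text \<open>Contracting the edge {u,v}: v is merged into u; parallel edges are
automatically identified (edges form a set) and the contracted edge disappears.\<close>
definition contract_edge :: "graph \<Rightarrow> nat \<Rightarrow> nat \<Rightarrow> graph" where
  "contract_edge G u v =
     (verts G - {v},
      {(\<lambda>x. if x = v then u else x) ` e | e. e \<in> edges G \<and> e \<noteq> {u, v}})"

inductive minor_step :: "graph \<Rightarrow> graph \<Rightarrow> bool" where
  del: "e \<in> edges G \<Longrightarrow> minor_step G (del_edge G e)"
| contr: "{u, v} \<in> edges G \<Longrightarrow> u \<noteq> v \<Longrightarrow> minor_step G (contract_edge G u v)"

definition graph_iso :: "graph \<Rightarrow> graph \<Rightarrow> bool" where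
  "graph_iso G H \<longleftrightarrow> (\<exists>f. bij_betw f (verts G) (verts H) \<and>
     (\<forall>x\<in>verts G. \<forall>y\<in>verts G. ({x, y} \<in> edges G \<longleftrightarrow> {f x, f y} \<in> edges H)))"

definition is_minor :: "graph \<Rightarrow> graph \<Rightarrow> bool" where
  "is_minor H G \<longleftrightarrow> (\<exists>G'. minor_step\<^sup>*\<^sup>* G G' \<and> graph_iso G' H)"

definition C2 :: "nat \<Rightarrow> graph" where
  "C2 n = ({0..<n},
     {{i, (i + 1) mod n} | i. i < n} \<union> {{i, (i + 2) mod n} | i. i < n})"

definition W6 :: graph where
  "W6 = ({0..6}, {{i, (i + 1) mod 6} | i::nat. i < 6} \<union> {{i, 6} | i::nat. i < 6})"

end

(*
  W6 has seven vertices and a hub of degree 6. An edge deletion keeps every vertex and an edge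
  contraction removes exactly one, so a 7-vertex minor of C2 n with n <= 8 is a subgraph of C2 n or
  of a single contraction of it. C2 n is 4-regular and each of its edges lies in a triangle, so
  contracting an edge uv leaves the merged vertex with at most 3 + 3 - 1 = 5 neighbours: no vertex
  can play the hub. For n >= 9 the minor is explicit: the hub is the path 0-2-4, the rim is
  1, 3, 5, 6, the path 7, ..., n-2 contracted to a single vertex, and n-1.
*)

theory Submission
  imports Defs
begin

lemma verts_del_edge [simp]: "verts (del_edge G e) = verts G"
  and edges_del_edge [simp]: "edges (del_edge G e) = edges G - {e}"
  by (simp_all add: del_edge_def verts_def edges_def)

lemma verts_contract_edge [simp]: "verts (contract_edge G u v) = verts G - {v}"
  and edges_contract_edge:
    "edges (contract_edge G u v) =
      (\<lambda>e. (\<lambda>x. if x = v then u else x) ` e) ` {e \<in> edges G. e \<noteq> {u, v}}"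
  by (auto simp: contract_edge_def verts_def edges_def)

lemma mem_edges_contract_edge:
  "e' \<in> edges (contract_edge G u v) \<longleftrightarrow>
    (\<exists>e\<in>edges G. e \<noteq> {u, v} \<and> e' = (\<lambda>x. if x = v then u else x) ` e)"
  unfolding contract_edge_def edges_def by auto

lemma graph_eqI: "verts G = verts H \<Longrightarrow> edges G = edges H \<Longrightarrow> G = H"
  by (simp add: verts_def edges_def prod_eq_iff)

definition nbrs :: "graph \<Rightarrow> nat \<Rightarrow> nat set" where
  "nbrs G x = {y. {x, y} \<in> edges G}"

lemma nbrs_sym: "y \<in> nbrs G x \<longleftrightarrow> x \<in> nbrs G y"
  by (simp add: nbrs_def insert_commute)

lemma nbrs_mono: "edges G \<subseteq> edges H \<Longrightarrow> nbrs G x \<subseteq> nbrs H x"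
  by (auto simp: nbrs_def)

lemma simple_graph_nbrs:
  assumes "simple_graph G"
  shows "nbrs G x \<subseteq> verts G - {x}" and "finite (nbrs G x)"
proof -
  show "nbrs G x \<subseteq> verts G - {x}"
    using assms by (fastforce simp: simple_graph_def nbrs_def)
  then show "finite (nbrs G x)"
    using assms by (auto simp: simple_graph_def intro: finite_subset)
qed

lemma simple_graph_edge_neq: "simple_graph G \<Longrightarrow> {a, b} \<in> edges G \<Longrightarrow> a \<noteq> b"
  by (fastforce simp: simple_graph_def)

lemma simple_graph_minor_step:
  assumes "minor_step G H" "simple_graph G"
  shows "simple_graph H"
  using assms
proof cases
  case (del e)
  then show ?thesis using assms(2) by (auto simp: simple_graph_def)
next
  case (contr u v)
  let ?f = "\<lambda>x. if x = v then u else x"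
  have "?f ` e \<subseteq> verts G - {v} \<and> card (?f ` e) = 2" if "e \<in> edges G" "e \<noteq> {u, v}" for e
  proof -
    obtain a b where e: "e = {a, b}" "a \<noteq> b" "a \<in> verts G" "b \<in> verts G"
      using assms(2) \<open>e \<in> edges G\<close> by (auto simp: simple_graph_def card_2_iff)
    have "u \<in> verts G" using assms(2) contr by (auto simp: simple_graph_def)
    then have "{?f a, ?f b} \<subseteq> verts G - {v}" using e contr(3) by auto
    moreover have "?f a \<noteq> ?f b"
    proof
      assume "?f a = ?f b"
      then have "{a, b} = {u, v}" using e(2) by (auto split: if_splits)
      then show False using e(1) that(2) by blast
    qed
    ultimately show ?thesis unfolding e(1) image_insert image_empty by simp
  qed
  moreover have "finite (verts G - {v})" using assms(2) by (simp add: simple_graph_def)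
  ultimately show ?thesis using contr(1) by (auto simp: simple_graph_def edges_contract_edge)
qed

lemma simple_graph_minor:
  "minor_step\<^sup>*\<^sup>* G H \<Longrightarrow> simple_graph G \<Longrightarrow> simple_graph H"
  by (induction rule: rtranclp_induct) (auto intro: simple_graph_minor_step)

lemma verts_minor_subset: "minor_step\<^sup>*\<^sup>* G H \<Longrightarrow> verts H \<subseteq> verts G"
  by (induction rule: rtranclp_induct) (auto elim!: minor_step.cases)

lemma edges_contract_edge_mono:
  "edges G \<subseteq> edges H \<Longrightarrow> edges (contract_edge G u v) \<subseteq> edges (contract_edge H u v)"
  unfolding edges_contract_edge by blast

lemma minor_missing_at_most_one_vertex:
  assumes "minor_step\<^sup>*\<^sup>* G H" "simple_graph G"
  shows "(verts H = verts G \<longrightarrow> edges H \<subseteq> edges G) \<and>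
    (\<forall>w\<in>verts G. verts H = verts G - {w} \<longrightarrow>
       (\<exists>u. {u, w} \<in> edges G \<and> edges H \<subseteq> edges (contract_edge G u w)))"
  using assms(1)
proof (induction rule: rtranclp_induct)
  case base
  then show ?case by blast
next
  case (step H' H)
  have sub: "verts H' \<subseteq> verts G" using step(1) by (rule verts_minor_subset)
  have simple: "simple_graph H'" using step(1) assms(2) by (rule simple_graph_minor)
  from step(2) show ?case
  proof cases
    case (del e)
    then have "verts H = verts H'" "edges H \<subseteq> edges H'" by auto
    with step(3) show ?thesis by (metis subset_trans)
  next
    case (contr u v)
    have "v \<in> verts H'" using simple contr(2) by (auto simp: simple_graph_def)
    then have "verts H \<noteq> verts G" using contr(1) sub by auto
    moreover have "\<exists>u. {u, w} \<in> edges G \<and> edges H \<subseteq> edges (contract_edge G u w)"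
      if "w \<in> verts G" "verts H = verts G - {w}" for w
    proof -
      have "w = v" using that \<open>v \<in> verts H'\<close> sub contr(1) by auto
      then have "verts H' = verts G" using that \<open>v \<in> verts H'\<close> sub contr(1) by auto
      then have "edges H' \<subseteq> edges G" using step(3) by blast
      then show ?thesis using contr \<open>w = v\<close> edges_contract_edge_mono by blast
    qed
    ultimately show ?thesis by blast
  qed
qed

lemma spanning_subgraph_minor:
  assumes "finite (edges G)" "verts H = verts G" "edges H \<subseteq> edges G"
  shows "minor_step\<^sup>*\<^sup>* G H"
proof -
  have "minor_step\<^sup>*\<^sup>* G (verts G, edges G - F)" if "finite F" for F
    using that
  proof (induction F rule: finite_induct)
    case empty
    then show ?case by (simp add: verts_def edges_def)
  next
    case (insert e F)
    show ?case
    proof (cases "e \<in> edges G - F")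
      case True
      have "del_edge (verts G, edges G - F) e = (verts G, edges G - insert e F)"
        by (auto simp: del_edge_def verts_def edges_def)
      moreover have "e \<in> edges (verts G, edges G - F)"
        using True by (simp add: edges_def)
      ultimately have "minor_step (verts G, edges G - F) (verts G, edges G - insert e F)"
        by (metis minor_step.del)
      with insert.IH show ?thesis by (rule rtranclp.rtrancl_into_rtrancl)
    next
      case False
      then have "edges G - insert e F = edges G - F" by auto
      with insert.IH show ?thesis by simp
    qed
  qed
  moreover have "(verts G, edges G - (edges G - edges H)) = H"
    using assms(2,3) by (intro graph_eqI) (auto simp: verts_def edges_def)
  ultimately show ?thesis using assms(1) by (metis finite_Diff)
qed

lemma finite_edges: "simple_graph G \<Longrightarrow> finite (edges G)"
  unfolding simple_graph_def by (meson Pow_iff finite_Pow_iff finite_subset subsetI)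

section \<open>Neighbourhoods after one contraction\<close>

lemma contract_edge_edgeE:
  assumes "{x, y} \<in> edges (contract_edge G u w)" "simple_graph G"
  obtains a b where "{a, b} \<in> edges G" "{a, b} \<noteq> {u, w}"
    "x = (if a = w then u else a)" "y = (if b = w then u else b)"
proof -
  let ?f = "\<lambda>x. if x = w then u else x"
  obtain e where e: "e \<in> edges G" "e \<noteq> {u, w}" "{x, y} = ?f ` e"
    using assms(1) unfolding mem_edges_contract_edge by blast
  have "card e = 2" using assms(2) e(1) by (simp add: simple_graph_def)
  then obtain a b where ab: "e = {a, b}" by (meson card_2_iff)
  have "{x, y} = {?f a, ?f b}" using e(3) unfolding ab by simp
  then consider "x = ?f a" "y = ?f b" | "x = ?f b" "y = ?f a"
    by (auto simp: doubleton_eq_iff)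
  then show thesis
  proof cases
    case 1
    then show thesis using that e(1,2) unfolding ab by blast
  next
    case 2
    then show thesis using that[of b a] e(1,2) unfolding ab by (simp add: insert_commute)
  qed
qed

lemma nbrs_contract_edge_merged:
  assumes "simple_graph G"
  shows "nbrs (contract_edge G u w) u \<subseteq> (nbrs G u - {w}) \<union> (nbrs G w - {u})"
proof
  fix y assume "y \<in> nbrs (contract_edge G u w) u"
  then have "{u, y} \<in> edges (contract_edge G u w)" by (simp add: nbrs_def)
  then obtain a b where ab: "{a, b} \<in> edges G" "{a, b} \<noteq> {u, w}"
    "u = (if a = w then u else a)" "y = (if b = w then u else b)"
    by (rule contract_edge_edgeE[OF _ assms])
  have "a \<noteq> b" using assms ab(1) by (rule simple_graph_edge_neq)
  have a: "a = u \<or> a = w" using ab(3) by (cases "a = w") simp_all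
  then have "b \<noteq> w" using ab(2) \<open>a \<noteq> b\<close> by blast
  then have "y = b" using ab(4) by simp
  from a show "y \<in> (nbrs G u - {w}) \<union> (nbrs G w - {u})"
  proof
    assume "a = u"
    then show ?thesis using ab(1) \<open>b \<noteq> w\<close> \<open>y = b\<close> by (simp add: nbrs_def)
  next
    assume "a = w"
    then have "b \<noteq> u" using ab(2) by (auto simp: insert_commute)
    then show ?thesis using ab(1) \<open>a = w\<close> \<open>y = b\<close> by (simp add: nbrs_def)
  qed
qed

lemma nbrs_contract_edge_other:
  assumes "simple_graph G" "x \<noteq> u" "x \<noteq> w"
  shows "nbrs (contract_edge G u w) x \<subseteq> (\<lambda>y. if y = w then u else y) ` nbrs G x"
proof
  fix y assume "y \<in> nbrs (contract_edge G u w) x"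
  then have "{x, y} \<in> edges (contract_edge G u w)" by (simp add: nbrs_def)
  then obtain a b where ab: "{a, b} \<in> edges G"
    "x = (if a = w then u else a)" "y = (if b = w then u else b)"
    by (rule contract_edge_edgeE[OF _ assms(1)])
  then have "x = a" using assms(2) by presburger
  then show "y \<in> (\<lambda>y. if y = w then u else y) ` nbrs G x"
    using ab(1,3) by (simp add: nbrs_def)
qed

lemma card_nbrs_contract_edge_merged:
  assumes "simple_graph G" "w \<in> nbrs G u" "z \<in> nbrs G u" "z \<in> nbrs G w"
  shows "card (nbrs (contract_edge G u w) u) + 3 \<le> card (nbrs G u) + card (nbrs G w)"
proof -
  \<comment> \<open>u and w drop out of the merged neighbourhood, and the common neighbour z is counted once\<close>
  let ?A = "nbrs G u - {w}" and ?B = "nbrs G w - {u}"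
  have fin: "finite ?A" "finite ?B" using simple_graph_nbrs(2)[OF assms(1)] by auto
  have "u \<in> nbrs G w" using assms(2) by (simp add: nbrs_sym)
  then have cards: "card ?A + 1 = card (nbrs G u)" "card ?B + 1 = card (nbrs G w)"
    using assms(2) simple_graph_nbrs(2)[OF assms(1)] by (metis card_Suc_Diff1 Suc_eq_plus1)+
  have "z \<in> ?A \<inter> ?B"
    using assms(3,4) simple_graph_nbrs(1)[OF assms(1)] by blast
  then have "1 \<le> card (?A \<inter> ?B)"
    using fin by (metis One_nat_def card_gt_0_iff emptyE finite_Int less_eq_Suc_le)
  moreover have "card (?A \<union> ?B) + card (?A \<inter> ?B) = card ?A + card ?B"
    using fin by (rule card_Un_Int[symmetric])
  moreover have "card (nbrs (contract_edge G u w) u) \<le> card (?A \<union> ?B)"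
    using fin nbrs_contract_edge_merged[OF assms(1)] by (simp add: card_mono)
  ultimately show ?thesis using cards by linarith
qed

lemma card_nbrs_contract_edge_other:
  assumes "simple_graph G" "x \<noteq> u" "x \<noteq> w"
  shows "card (nbrs (contract_edge G u w) x) \<le> card (nbrs G x)"
proof -
  have "finite (nbrs G x)" using assms(1) by (rule simple_graph_nbrs)
  then show ?thesis
    using nbrs_contract_edge_other[OF assms]
    by (meson card_image_le card_mono finite_imageI order_trans)
qed

lemma graph_iso_max_degree:
  assumes "graph_iso G H" "simple_graph G" "\<forall>x\<in>verts G. card (nbrs G x) \<le> k"
    "simple_graph H"
  shows "\<forall>y\<in>verts H. card (nbrs H y) \<le> k"
proof
  obtain f where f: "bij_betw f (verts G) (verts H)"
    "\<forall>x\<in>verts G. \<forall>y\<in>verts G. {x, y} \<in> edges G \<longleftrightarrow> {f x, f y} \<in> edges H"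
    using assms(1) by (auto simp: graph_iso_def)
  fix y assume "y \<in> verts H"
  then obtain x where x: "x \<in> verts G" "y = f x"
    using f(1) by (auto simp: bij_betw_def)
  have "nbrs H y \<subseteq> f ` nbrs G x"
  proof
    fix z assume z: "z \<in> nbrs H y"
    then obtain x' where "x' \<in> verts G" "z = f x'"
      using simple_graph_nbrs(1)[OF assms(4)] f(1) by (force simp: bij_betw_def)
    then show "z \<in> f ` nbrs G x" using z x f(2) by (auto simp: nbrs_def)
  qed
  moreover have "finite (nbrs G x)" using assms(2) by (rule simple_graph_nbrs)
  ultimately have "card (nbrs H y) \<le> card (nbrs G x)"
    by (meson card_image_le card_mono finite_imageI order_trans)
  then show "card (nbrs H y) \<le> k" using assms(3) x(1) by (meson le_trans)
qed

lemma verts_W6: "verts W6 = {0..6}"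
  and edges_W6: "edges W6 = {{i, (i + 1) mod 6} | i. i < 6} \<union> {{i, 6} | i. i < 6}"
  by (simp_all add: W6_def verts_def edges_def)

lemma simple_graph_W6: "simple_graph W6"
  by (auto simp: simple_graph_def verts_W6 edges_W6 mod_Suc)

lemma doubleton_mem_edges_W6:
  "{a, b} \<in> edges W6 \<longleftrightarrow>
    (a < 6 \<and> b = (a + 1) mod 6) \<or> (b < 6 \<and> a = (b + 1) mod 6) \<or> (a < 6 \<and> b = 6) \<or> (b < 6 \<and> a = 6)"
  unfolding edges_W6 by (auto simp: doubleton_eq_iff)

lemma card_nbrs_W6_hub: "card (nbrs W6 6) = 6"
proof -
  have "nbrs W6 6 = {0..<6}"
    by (auto simp: nbrs_def edges_W6 doubleton_eq_iff)
  then show ?thesis by simp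
qed

lemma not_graph_iso_W6:
  assumes "simple_graph G" "\<forall>x\<in>verts G. card (nbrs G x) \<le> 5"
  shows "\<not> graph_iso G W6"
proof
  assume "graph_iso G W6"
  from graph_iso_max_degree[OF this assms simple_graph_W6]
  have "card (nbrs W6 6) \<le> 5" by (simp add: verts_W6)
  then show False by (simp add: card_nbrs_W6_hub)
qed

lemma verts_C2: "verts (C2 n) = {0..<n}"
  and edges_C2: "edges (C2 n) = {{i, (i + 1) mod n} | i. i < n} \<union> {{i, (i + 2) mod n} | i. i < n}"
  by (simp_all add: C2_def verts_def edges_def)

lemma mem_edges_C2: "e \<in> edges (C2 n) \<longleftrightarrow> (\<exists>i<n. \<exists>c\<in>{1, 2}. e = {i, (i + c) mod n})"
  unfolding edges_C2 by blast

lemma add_mod_neq_self: "0 < c \<Longrightarrow> c < n \<Longrightarrow> i < n \<Longrightarrow> (i + c) mod n \<noteq> (i::nat)"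
  by (cases "i + c < n") (simp_all add: le_mod_geq)

lemma add_mod_add_diff_cancel: "i < n \<Longrightarrow> c \<le> n \<Longrightarrow> ((i + c) mod n + (n - c)) mod n = (i::nat)"
proof -
  assume "i < n" "c \<le> n"
  then have "((i + c) mod n + (n - c)) mod n = (i + n) mod n"
    by (metis add.assoc le_add_diff_inverse mod_add_left_eq)
  then show ?thesis using \<open>i < n\<close> by simp
qed

lemma simple_graph_C2:
  assumes "3 \<le> n"
  shows "simple_graph (C2 n)"
proof -
  have "e \<subseteq> {0..<n} \<and> card e = 2" if e: "e \<in> edges (C2 n)" for e
  proof -
    obtain i c where "i < n" "c \<in> {1, 2}" "e = {i, (i + c) mod n}"
      using e unfolding mem_edges_C2 by blast
    moreover have "(i + c) mod n \<noteq> i"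
      using add_mod_neq_self[of c n i] calculation assms by auto
    ultimately show ?thesis by auto
  qed
  then show ?thesis by (simp add: simple_graph_def verts_C2)
qed

lemma nbrs_C2_subset:
  assumes "x < n" "2 \<le> n"
  shows "nbrs (C2 n) x \<subseteq>
    set [(x + 1) mod n, (x + 2) mod n, (x + (n - 1)) mod n, (x + (n - 2)) mod n]"
proof
  fix y assume "y \<in> nbrs (C2 n) x"
  then obtain i c where i: "i < n" "c = 1 \<or> c = 2" "{x, y} = {i, (i + c) mod n}"
    unfolding nbrs_def mem_edges_C2 by blast
  then consider "x = i" "y = (i + c) mod n" | "x = (i + c) mod n" "y = i"
    by (auto simp: doubleton_eq_iff)
  then show "y \<in> set [(x + 1) mod n, (x + 2) mod n, (x + (n - 1)) mod n, (x + (n - 2)) mod n]"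
  proof cases
    case 1
    then show ?thesis using i(2) by auto
  next
    case 2
    then have "y = (x + (n - c)) mod n"
      using add_mod_add_diff_cancel[of i n c] i(1,2) assms(2) by auto
    then show ?thesis using i(2) by auto
  qed
qed

lemma card_nbrs_C2:
  assumes "x < n" "2 \<le> n"
  shows "card (nbrs (C2 n) x) \<le> 4"
proof -
  let ?xs = "[(x + 1) mod n, (x + 2) mod n, (x + (n - 1)) mod n, (x + (n - 2)) mod n]"
  have "card (nbrs (C2 n) x) \<le> card (set ?xs)"
    using nbrs_C2_subset[OF assms] by (intro card_mono) simp_all
  also have "\<dots> \<le> 4"
    using card_length[of ?xs] by simp
  finally show ?thesis .
qed

lemma C2_edge_in_triangle:
  assumes "{u, w} \<in> edges (C2 n)"
  obtains z where "z \<in> nbrs (C2 n) u" "z \<in> nbrs (C2 n) w"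
proof -
  obtain i c where i: "i < n" "c = 1 \<or> c = 2" "{u, w} = {i, (i + c) mod n}"
    using assms unfolding mem_edges_C2 by blast
  define j k where "j = (i + 1) mod n" and "k = (i + 2) mod n"
  have "{i, j} \<in> edges (C2 n)" "{i, k} \<in> edges (C2 n)"
    using i(1) unfolding j_def k_def mem_edges_C2 by blast+
  moreover have "{j, k} \<in> edges (C2 n)"
  proof -
    have "j < n" using i(1) unfolding j_def by simp
    then have "{j, (j + 1) mod n} \<in> edges (C2 n)" unfolding mem_edges_C2 by blast
    moreover have "(j + 1) mod n = k" unfolding j_def k_def by (simp add: mod_Suc_eq)
    ultimately show ?thesis by simp
  qed
  ultimately have "j \<in> nbrs (C2 n) i" "k \<in> nbrs (C2 n) i" "j \<in> nbrs (C2 n) k" "k \<in> nbrs (C2 n) j"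
    by (simp_all add: nbrs_def insert_commute)
  note nbrs = this
  from i(2) show thesis
  proof
    assume "c = 1"
    then have "{u, w} = {i, j}" using i(3) unfolding j_def by simp
    then show thesis using that[of k] nbrs by (auto simp: doubleton_eq_iff)
  next
    assume "c = 2"
    then have "{u, w} = {i, k}" using i(3) unfolding k_def by simp
    then show thesis using that[of j] nbrs by (auto simp: doubleton_eq_iff)
  qed
qed

section \<open>No W6 minor in C2 n for n \<le> 8\<close>

lemma subset_card_ge_pred_cases:
  assumes "finite A" "B \<subseteq> A" "card A \<le> card B + 1"
  shows "B = A \<or> (\<exists>w\<in>A. B = A - {w})"
proof -
  have "card (A - B) \<le> 1"
    using assms by (simp add: card_Diff_subset finite_subset)
  then consider "A - B = {}" | w where "A - B = {w}"
    using assms(1) by (metis card_0_eq card_1_singletonE finite_Diff One_nat_def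
        less_Suc0 le_less)
  then show ?thesis using assms(2) by cases auto
qed

lemma max_degree_contract_edge_C2:
  assumes "3 \<le> n" "{u, w} \<in> edges (C2 n)" "x \<in> verts (C2 n) - {w}"
  shows "card (nbrs (contract_edge (C2 n) u w) x) \<le> 5"
proof -
  have simple: "simple_graph (C2 n)" using assms(1) by (rule simple_graph_C2)
  have "u < n" "w < n" "x < n"
    using assms(2,3) simple unfolding simple_graph_def verts_C2 by auto
  show ?thesis
  proof (cases "x = u")
    case True
    obtain z where "z \<in> nbrs (C2 n) u" "z \<in> nbrs (C2 n) w"
      using C2_edge_in_triangle[OF assms(2)] .
    moreover have "w \<in> nbrs (C2 n) u" using assms(2) by (simp add: nbrs_def)
    ultimately have "card (nbrs (contract_edge (C2 n) u w) u) + 3 \<le>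
        card (nbrs (C2 n) u) + card (nbrs (C2 n) w)"
      using simple by (intro card_nbrs_contract_edge_merged)
    then show ?thesis
      using True card_nbrs_C2[of u n] card_nbrs_C2[of w n] \<open>u < n\<close> \<open>w < n\<close> assms(1) by simp
  next
    case False
    then have "card (nbrs (contract_edge (C2 n) u w) x) \<le> card (nbrs (C2 n) x)"
      using simple assms(3) by (intro card_nbrs_contract_edge_other) simp_all
    also have "\<dots> \<le> 4" using \<open>x < n\<close> assms(1) by (intro card_nbrs_C2) simp_all
    finally show ?thesis by simp
  qed
qed

lemma max_degree_large_minor_C2:
  assumes "3 \<le> n" "minor_step\<^sup>*\<^sup>* (C2 n) G" "n \<le> card (verts G) + 1"
  shows "\<forall>x\<in>verts G. card (nbrs G x) \<le> 5"
proof
  fix x assume x: "x \<in> verts G"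
  have simple: "simple_graph (C2 n)" using assms(1) by (rule simple_graph_C2)
  have sub: "verts G \<subseteq> verts (C2 n)" using assms(2) by (rule verts_minor_subset)
  consider "verts G = verts (C2 n)" | w where "w \<in> verts (C2 n)" "verts G = verts (C2 n) - {w}"
    using subset_card_ge_pred_cases[OF _ sub] assms(3) by (auto simp: verts_C2)
  then show "card (nbrs G x) \<le> 5"
  proof cases
    case 1
    then have "edges G \<subseteq> edges (C2 n)"
      using minor_missing_at_most_one_vertex[OF assms(2) simple] by blast
    then have "card (nbrs G x) \<le> card (nbrs (C2 n) x)"
      using simple_graph_nbrs(2)[OF simple] by (intro card_mono nbrs_mono)
    also have "\<dots> \<le> 4" using x sub assms(1) by (intro card_nbrs_C2) (auto simp: verts_C2)
    finally show ?thesis by simp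
  next
    case (2 w)
    then obtain u where u: "{u, w} \<in> edges (C2 n)" "edges G \<subseteq> edges (contract_edge (C2 n) u w)"
      using minor_missing_at_most_one_vertex[OF assms(2) simple] by blast
    have "simple_graph (contract_edge (C2 n) u w)"
      using minor_step.contr[OF u(1) simple_graph_edge_neq[OF simple u(1)]] simple
      by (rule simple_graph_minor_step)
    then have "card (nbrs G x) \<le> card (nbrs (contract_edge (C2 n) u w) x)"
      using u(2) by (intro card_mono nbrs_mono simple_graph_nbrs(2))
    also have "\<dots> \<le> 5" using assms(1) u(1) x 2 by (intro max_degree_contract_edge_C2) auto
    finally show ?thesis .
  qed
qed

lemma not_minor_W6_C2:
  assumes "n \<le> 8"
  shows "\<not> is_minor W6 (C2 n)"
proof
  assume "is_minor W6 (C2 n)"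
  then obtain G where G: "minor_step\<^sup>*\<^sup>* (C2 n) G" "graph_iso G W6"
    by (auto simp: is_minor_def)
  have "card (verts G) = 7"
    using G(2) by (auto simp: graph_iso_def verts_W6 dest: bij_betw_same_card)
  moreover have "card (verts G) \<le> n"
    using card_mono[OF _ verts_minor_subset[OF G(1)]] by (simp add: verts_C2)
  ultimately have "3 \<le> n" "n \<le> card (verts G) + 1" using assms by simp_all
  then have "simple_graph G" "\<forall>x\<in>verts G. card (nbrs G x) \<le> 5"
    using simple_graph_minor[OF G(1) simple_graph_C2] max_degree_large_minor_C2[OF _ G(1)]
    by simp_all
  then show False using not_graph_iso_W6 G(2) by blast
qed

section \<open>A W6 minor in C2 n for n \<ge> 9\<close>

lemma edges_contract_edge_absorb:
  assumes "\<forall>e\<in>F. v \<notin> e" "u \<notin> X" "v \<notin> X"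
  shows "edges (contract_edge (V, F \<union> insert {u, v} ((\<lambda>x. {v, x}) ` X)) u v) =
    F \<union> (\<lambda>x. {u, x}) ` X"
proof -
  let ?f = "\<lambda>x. if x = v then u else x"
  have "(\<lambda>e. ?f ` e) ` F = F"
  proof -
    have "?f ` e = e" if "e \<in> F" for e
      using assms(1) that by force
    then show ?thesis by (metis (no_types, lifting) image_cong image_ident)
  qed
  moreover have "(\<lambda>e. ?f ` e) ` (\<lambda>x. {v, x}) ` X = (\<lambda>x. {u, x}) ` X"
  proof -
    have "?f ` {v, x} = {u, x}" if "x \<in> X" for x
      using assms(3) that by auto
    then show ?thesis unfolding image_image by (rule image_cong[OF refl])
  qed
  moreover have
    "{e \<in> F \<union> insert {u, v} ((\<lambda>x. {v, x}) ` X). e \<noteq> {u, v}} = F \<union> (\<lambda>x. {v, x}) ` X"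
    using assms by (auto simp: doubleton_eq_iff)
  ultimately show ?thesis
    unfolding edges_contract_edge by (simp add: edges_def image_Un)
qed

(* In split_wheel k m (with 7 <= k < m) the path 0-2-4 is the future hub, joined to 1, 3, 5, 6,
   k and m, and the rim is the cycle 1, 3, 5, 6, 7, ..., k, m. *)
definition wheel_frame :: "nat \<Rightarrow> nat set set" where
  "wheel_frame m = {{0, 2}, {2, 4}, {0, 1}, {2, 3}, {4, 5}, {4, 6}, {0, m},
     {1, 3}, {3, 5}, {5, 6}, {m, 1}}"

definition rim_path :: "nat \<Rightarrow> nat set set" where
  "rim_path k = {{j, Suc j} | j. 6 \<le> j \<and> j < k}"

definition split_wheel :: "nat \<Rightarrow> nat \<Rightarrow> graph" where
  "split_wheel k m = ({0..k} \<union> {m}, wheel_frame m \<union> rim_path k \<union> {{k, m}, {k, 0}})"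

lemma verts_split_wheel: "verts (split_wheel k m) = {0..k} \<union> {m}"
  and edges_split_wheel: "edges (split_wheel k m) = wheel_frame m \<union> rim_path k \<union> {{k, m}, {k, 0}}"
  by (simp_all add: split_wheel_def verts_def edges_def)

lemma contract_split_wheel:
  assumes "7 \<le> k" "Suc k < m"
  shows "contract_edge (split_wheel (Suc k) m) k (Suc k) = split_wheel k m"
proof (rule graph_eqI)
  show "verts (contract_edge (split_wheel (Suc k) m) k (Suc k)) = verts (split_wheel k m)"
    using assms by (auto simp: verts_split_wheel)
  have "rim_path (Suc k) = insert {k, Suc k} (rim_path k)"
    using assms(1) by (auto simp: rim_path_def less_Suc_eq)
  then have shape: "split_wheel (Suc k) m = ({0..Suc k} \<union> {m},
      (wheel_frame m \<union> rim_path k) \<union> insert {k, Suc k} ((\<lambda>x. {Suc k, x}) ` {m, 0}))"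
    unfolding split_wheel_def by auto
  have "\<forall>e\<in>wheel_frame m \<union> rim_path k. Suc k \<notin> e"
    using assms by (auto simp: wheel_frame_def rim_path_def)
  then have "edges (contract_edge (split_wheel (Suc k) m) k (Suc k)) =
      wheel_frame m \<union> rim_path k \<union> (\<lambda>x. {k, x}) ` {m, 0}"
    unfolding shape using assms by (intro edges_contract_edge_absorb) auto
  then show "edges (contract_edge (split_wheel (Suc k) m) k (Suc k)) = edges (split_wheel k m)"
    by (simp add: edges_split_wheel)
qed

lemma split_wheel_minor_shorten:
  assumes "7 \<le> k" "k < m"
  shows "minor_step\<^sup>*\<^sup>* (split_wheel k m) (split_wheel 7 m)"
  using assms
proof (induction k rule: nat_induct_at_least)
  case base
  then show ?case by simp
next
  case (Suc k)
  have "{k, Suc k} \<in> edges (split_wheel (Suc k) m)"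
    using Suc.hyps(1) by (auto simp: edges_split_wheel rim_path_def)
  then have "minor_step (split_wheel (Suc k) m) (contract_edge (split_wheel (Suc k) m) k (Suc k))"
    by (rule minor_step.contr) simp
  then have "minor_step (split_wheel (Suc k) m) (split_wheel k m)"
    by (simp only: contract_split_wheel[OF Suc.hyps(1) Suc.prems])
  then show ?case using Suc by (meson converse_rtranclp_into_rtranclp Suc_lessD)
qed

lemma edges_split_wheel_7:
  "edges (split_wheel 7 m) = set [{0, 2}, {2, 4}, {0, 1}, {2, 3}, {4, 5}, {4, 6}, {0, m},
     {1, 3}, {3, 5}, {5, 6}, {m, 1}, {6, 7}, {7, m}, {7, 0}]"
proof -
  have "rim_path 7 = {{6, 7}}"
    by (auto simp: rim_path_def)
  then show ?thesis by (auto simp: edges_split_wheel wheel_frame_def)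
qed

lemma edges_split_wheel_7_contract_2:
  assumes "8 \<le> m"
  shows "edges (contract_edge (split_wheel 7 m) 0 2) =
    set [{0, 4}, {0, 1}, {0, 3}, {4, 5}, {4, 6}, {0, m}, {1, 3}, {3, 5}, {5, 6}, {m, 1}, {6, 7},
      {7, m}, {7, 0}]"
  using assms unfolding edges_contract_edge edges_split_wheel_7
  unfolding set_filter[symmetric] set_map[symmetric]
  by (simp add: doubleton_eq_iff insert_commute)

lemma edges_split_wheel_7_hub:
  assumes "8 \<le> m"
  shows "edges (contract_edge (contract_edge (split_wheel 7 m) 0 2) 0 4) =
    set [{0, 1}, {0, 3}, {0, 5}, {0, 6}, {0, m}, {1, 3}, {3, 5}, {5, 6}, {m, 1}, {6, 7}, {7, m},
      {7, 0}]"
  using assms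
  unfolding edges_contract_edge[of "contract_edge _ 0 2"] edges_split_wheel_7_contract_2[OF assms]
  unfolding set_filter[symmetric] set_map[symmetric]
  by (simp add: doubleton_eq_iff insert_commute)

lemma graph_iso_split_wheel_7_hub:
  assumes "8 \<le> m"
  shows "graph_iso (contract_edge (contract_edge (split_wheel 7 m) 0 2) 0 4) W6"
proof -
  define f :: "nat \<Rightarrow> nat" where
    "f x = (if x = 0 then 6 else if x = 1 then 0 else if x = 3 then 1 else if x = 5 then 2
      else if x = 6 then 3 else if x = 7 then 4 else 5)" for x
  have "{0..6::nat} = {0, 1, 2, 3, 4, 5, 6}" by auto
  then have "bij_betw f {0, 1, 3, 5, 6, 7, m} (verts W6)"
    unfolding bij_betw_def inj_on_def verts_W6 using assms by (auto simp: f_def)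
  moreover have "\<forall>x\<in>{0, 1, 3, 5, 6, 7, m}. \<forall>y\<in>{0, 1, 3, 5, 6, 7, m}.
      {x, y} \<in> set [{0, 1}, {0, 3}, {0, 5}, {0, 6}, {0, m}, {1, 3}, {3, 5}, {5, 6}, {m, 1},
        {6, 7}, {7, m}, {7, 0}] \<longleftrightarrow> {f x, f y} \<in> edges W6"
    unfolding doubleton_mem_edges_W6 using assms by (simp add: f_def doubleton_eq_iff)
  moreover have
    "verts (contract_edge (contract_edge (split_wheel 7 m) 0 2) 0 4) = {0, 1, 3, 5, 6, 7, m}"
    using assms by (auto simp: verts_split_wheel)
  ultimately show ?thesis
    unfolding graph_iso_def edges_split_wheel_7_hub[OF assms] by metis
qed

lemma split_wheel_subgraph_C2:
  assumes "8 \<le> m"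
  shows "verts (split_wheel (m - 1) m) = verts (C2 (Suc m))"
    and "edges (split_wheel (m - 1) m) \<subseteq> edges (C2 (Suc m))"
proof -
  show "verts (split_wheel (m - 1) m) = verts (C2 (Suc m))"
    using assms by (auto simp: verts_split_wheel verts_C2)
  have arc: "{i, (i + c) mod Suc m} \<in> edges (C2 (Suc m))" if "i \<le> m" "c \<in> {1, 2}" for i c
    using that le_imp_less_Suc unfolding mem_edges_C2 by blast
  have chord: "{i, j} \<in> edges (C2 (Suc m))" if "i < j" "j \<le> i + 2" "j \<le> m" for i j
  proof -
    have "j - i \<in> {1, 2}" "i + (j - i) = j" using that by auto
    then show ?thesis using arc[of i "j - i"] that by simp
  qed
  have "(m + 1) mod Suc m = 0" "(m + 2) mod Suc m = 1" "(m - 1 + 2) mod Suc m = 0"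
    using assms by (simp_all add: mod_Suc)
  then have wrap: "{0, m} \<in> edges (C2 (Suc m))" "{m, 1} \<in> edges (C2 (Suc m))"
      "{m - 1, 0} \<in> edges (C2 (Suc m))"
    using arc[of m 1] arc[of m 2] arc[of "m - 1" 2] by (simp_all add: insert_commute)
  have "wheel_frame m \<subseteq> edges (C2 (Suc m))"
    unfolding wheel_frame_def
    using chord[of 0 2] chord[of 2 4] chord[of 0 1] chord[of 2 3] chord[of 4 5] chord[of 4 6]
      chord[of 1 3] chord[of 3 5] chord[of 5 6] wrap assms
    by simp
  moreover have "rim_path (m - 1) \<subseteq> edges (C2 (Suc m))"
    using chord by (auto simp: rim_path_def)
  moreover have "{m - 1, m} \<in> edges (C2 (Suc m))"
    using chord[of "m - 1" m] assms by simp
  ultimately show "edges (split_wheel (m - 1) m) \<subseteq> edges (C2 (Suc m))"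
    using wrap(3) by (simp add: edges_split_wheel)
qed

lemma minor_W6_C2:
  assumes "9 \<le> n"
  shows "is_minor W6 (C2 n)"
proof -
  define m where "m = n - 1"
  have m: "n = Suc m" "8 \<le> m" using assms unfolding m_def by simp_all
  let ?H = "contract_edge (split_wheel 7 m) 0 2"
  have "finite (edges (C2 n))"
    using simple_graph_C2[of n] assms by (simp add: finite_edges)
  then have "minor_step\<^sup>*\<^sup>* (C2 n) (split_wheel (m - 1) m)"
    using split_wheel_subgraph_C2[OF m(2)] unfolding m(1) by (intro spanning_subgraph_minor)
  also have "minor_step\<^sup>*\<^sup>* \<dots> (split_wheel 7 m)"
    using m(2) by (intro split_wheel_minor_shorten) simp_all
  also have "minor_step \<dots> ?H"
    by (rule minor_step.contr) (simp_all add: edges_split_wheel_7)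
  also have "minor_step ?H (contract_edge ?H 0 4)"
    using m(2) by (intro minor_step.contr) (simp_all add: edges_split_wheel_7_contract_2)
  finally show ?thesis
    unfolding is_minor_def using graph_iso_split_wheel_7_hub[OF m(2)] by blast
qed

theorem lemma3p4:
  fixes n :: nat
  assumes "n \<ge> 5"
  shows "\<not> is_minor W6 (C2 n) \<longleftrightarrow> 5 \<le> n \<and> n \<le> 8"
proof (cases "n \<le> 8")
  case True
  then show ?thesis using assms not_minor_W6_C2 by simp
next
  case False
  then show ?thesis using minor_W6_C2 by simp
qed

end
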